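(* Let $\mathscr N$ be a weakly reversible chemical reaction network such that every decomposition $\mathscr N=\mathscr N_1\cup\cdots\cup\mathscr N_k$ satisfies $\delta=\delta_1+\cdots+\delta_k$. Then every independent decomposition of $\mathscr N$ is weakly reversible.
   Context: A chemical reaction network (CRN) $\mathscr N=(\mathscr S,\mathscr C,\mathscr R)$ consists of: - a finite set $\mathscr S$ of species; - a finite set $\mathscr C\subseteq\mathbb R^{\mathscr S}_{\ge0}$ of complexes; - a set $\mathscr R\subseteq\mathscr C\times\mathscr C$ of reactions (a directed graph on $\mathscr C$), with no reaction $y\to y$ and every complex occurring in some reaction. Linkage classes are the connected components of the underlying undirected graph. The network is weakly reversible if every linkage class is strongly connected. The deficiency is $\delta=n-l-s$, where: - $n$ is the number of complexes; - $l$ is the number of linkage classes; - $s=\dim S$, with $S=\operatorname{span}\{y'-y: y\to y'\in\mathscr R\}$ the stoichiometric subspace. A decomposition $\mathscr N=\mathscr N_1\cup\cdots\cup\mathscr N_k$ is the set of subnetworks induced by a partition $\{\mathscr R_1,\ldots,\mathscr R_k\}$ of $\mathscr R$. Each $\mathscr N_i$ has reactions $\mathscr R_i$ and the complexes occurring in them, with deficiency $\delta_i=n_i-l_i-s_i$. The decomposition is independent if $S=S_1\oplus\cdots\oplus S_k$. It is weakly reversible if every $\mathscr N_i$ is weakly reversible. *)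

theory Defs
  imports "HOL-Analysis.Analysis"
begin

text \<open>Species are the elements of a finite type 's; a complex is a vector in
  real^'s (nonnegative entries); a reaction y \<rightarrow> y' is a pair (y, y').\<close>

type_synonym 's cplx = "real ^ 's"
type_synonym 's reaction = "'s cplx \<times> 's cplx"

definition crn :: "'s::finite reaction set \<Rightarrow> bool" where
  "crn R \<longleftrightarrow> finite R \<and>
     (\<forall>(y, y') \<in> R. y \<noteq> y' \<and> (\<forall>i. 0 \<le> y $ i \<and> 0 \<le> y' $ i))"

definition complexes :: "'s::finite reaction set \<Rightarrow> 's cplx set" where
  "complexes R = fst ` R \<union> snd ` R"

definition linked :: "'s::finite reaction set \<Rightarrow> 's reaction set" where
  "linked R = (R \<union> R\<inverse>)\<^sup>*"

definition linkage_classes :: "'s::finite reaction set \<Rightarrow> 's cplx set set" where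
  "linkage_classes R = complexes R // linked R"

definition weakly_reversible :: "'s::finite reaction set \<Rightarrow> bool" where
  "weakly_reversible R \<longleftrightarrow>
     (\<forall>L \<in> linkage_classes R. \<forall>y \<in> L. \<forall>y' \<in> L. (y, y') \<in> R\<^sup>*)"

definition stoich_subspace :: "'s::finite reaction set \<Rightarrow> 's cplx set" where
  "stoich_subspace R = span {y' - y | y y'. (y, y') \<in> R}"

definition deficiency :: "'s::finite reaction set \<Rightarrow> int" where
  "deficiency R = int (card (complexes R)) - int (card (linkage_classes R))
                   - int (dim (stoich_subspace R))"

definition decomposition :: "'s::finite reaction set \<Rightarrow> nat \<Rightarrow> (nat \<Rightarrow> 's reaction set) \<Rightarrow> bool" where
  "decomposition R k Rs \<longleftrightarrow>
     (\<forall>i<k. Rs i \<noteq> {}) \<and>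
     (\<forall>i<k. \<forall>j<k. i \<noteq> j \<longrightarrow> Rs i \<inter> Rs j = {}) \<and>
     (\<Union>i<k. Rs i) = R"

text \<open>Independent: S is the (internal) direct sum S_1 \<oplus> ... \<oplus> S_k.\<close>
definition independent_decomposition :: "'s::finite reaction set \<Rightarrow> nat \<Rightarrow> (nat \<Rightarrow> 's reaction set) \<Rightarrow> bool" where
  "independent_decomposition R k Rs \<longleftrightarrow>
     decomposition R k Rs \<and>
     stoich_subspace R = {(\<Sum>i<k. v i) | v. \<forall>i<k. v i \<in> stoich_subspace (Rs i)} \<and>
     (\<forall>v. (\<forall>i<k. v i \<in> stoich_subspace (Rs i)) \<and> (\<Sum>i<k. v i) = 0 \<longrightarrow> (\<forall>i<k. v i = 0))"

definition weakly_reversible_decomposition :: "'s::finite reaction set \<Rightarrow> nat \<Rightarrow> (nat \<Rightarrow> 's reaction set) \<Rightarrow> bool" where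
  "weakly_reversible_decomposition R k Rs \<longleftrightarrow>
     decomposition R k Rs \<and> (\<forall>i<k. weakly_reversible (Rs i))"

end

theory Submission
  imports Defs "HOL-Library.Transitive_Closure_Table"
begin

text \<open>Splitting off all reactions outside a nonempty subnetwork T as singletons, each of
  deficiency 0, shows that the additivity hypothesis forces every nonempty subnetwork to
  have the deficiency of the whole network, hence deficiency 0. Now let y \<rightarrow> y' lie in
  block i of an independent decomposition. Weak reversibility gives a simple path from
  y' back to y; this path network has n + 1 complexes, one linkage class and deficiency 0,
  so its n reaction vectors are linearly independent. Distributing the closed walk
  y \<rightarrow> y' \<leadsto> y over the blocks gives a vanishing sum of vectors from the S_j, so the
  block-i part vanishes; hence the path vectors outside block i sum to zero, which by
  independence means there are none, and the whole path lies in block i.\<close>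

lemma linked_sym: "(x, y) \<in> linked T \<Longrightarrow> (y, x) \<in> linked T"
proof -
  assume "(x, y) \<in> linked T"
  then have "(y, x) \<in> ((T \<union> T\<inverse>)\<inverse>)\<^sup>*"
    unfolding linked_def by (simp add: rtrancl_converseI)
  then show ?thesis
    unfolding linked_def by (simp add: converse_Un sup_commute)
qed

lemma linked_complexes: "(z, w) \<in> linked T \<Longrightarrow> z \<in> complexes T \<Longrightarrow> w \<in> complexes T"
  unfolding linked_def by (induction rule: rtrancl_induct) (force simp: complexes_def)+

lemma linkage_classes_eq_singleton:
  assumes "complexes T \<noteq> {}"
    and "\<And>z w. z \<in> complexes T \<Longrightarrow> w \<in> complexes T \<Longrightarrow> (z, w) \<in> linked T"
  shows "linkage_classes T = {complexes T}"
proof -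
  have "linked T `` {z} = complexes T" if "z \<in> complexes T" for z
    using linked_complexes assms(2) that by blast
  then show ?thesis
    using assms(1) unfolding linkage_classes_def quotient_def by auto
qed

lemma weakly_reversible_iff_reactions_reversible:
  "weakly_reversible Q \<longleftrightarrow> (\<forall>(a, b) \<in> Q. (b, a) \<in> Q\<^sup>*)"
proof
  assume wr: "weakly_reversible Q"
  show "\<forall>(a, b) \<in> Q. (b, a) \<in> Q\<^sup>*"
  proof clarify
    fix a b assume ab: "(a, b) \<in> Q"
    then have "linked Q `` {a} \<in> linkage_classes Q"
      unfolding linkage_classes_def quotient_def complexes_def by force
    moreover have "a \<in> linked Q `` {a}" "b \<in> linked Q `` {a}"
      using ab unfolding linked_def by auto
    ultimately show "(b, a) \<in> Q\<^sup>*"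
      using wr unfolding weakly_reversible_def by blast
  qed
next
  assume rev: "\<forall>(a, b) \<in> Q. (b, a) \<in> Q\<^sup>*"
  have linked_sub: "linked Q \<subseteq> Q\<^sup>*"
    unfolding linked_def by (rule rtrancl_subset_rtrancl) (use rev in auto)
  show "weakly_reversible Q"
    unfolding weakly_reversible_def linkage_classes_def quotient_def
  proof clarify
    fix x y y' assume "(x, y) \<in> linked Q" "(x, y') \<in> linked Q"
    then have "(y, y') \<in> linked Q"
      using linked_sym unfolding linked_def by (meson rtrancl_trans)
    then show "(y, y') \<in> Q\<^sup>*" using linked_sub by auto
  qed
qed

lemma walk_in_rtrancl:
  assumes "\<forall>t<n. (f t, f (Suc t)) \<in> Q"
  shows "(f 0, f n) \<in> Q\<^sup>*"
  using assms by (induction n) (auto intro: rtrancl_into_rtrancl)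

lemma rtrancl_imp_simple_walk:
  assumes "(a, b) \<in> Q\<^sup>*"
  obtains n f where "f 0 = a" "f n = b" "\<forall>t<n. (f t, f (Suc t)) \<in> Q" "inj_on f {..n}"
proof -
  have "(\<lambda>x y. (x, y) \<in> Q)\<^sup>*\<^sup>* a b" using assms by (simp add: rtranclp_rtrancl_eq)
  then obtain xs where "rtrancl_path (\<lambda>x y. (x, y) \<in> Q) a xs b"
    by (auto simp: rtranclp_eq_rtrancl_path)
  then obtain ys where path: "rtrancl_path (\<lambda>x y. (x, y) \<in> Q) a ys b"
    and dist: "distinct (a # ys)"
    by (rule rtrancl_path_distinct)
  show ?thesis
  proof (rule that[of "\<lambda>t. (a # ys) ! t" "length ys"])
    show "(a # ys) ! length ys = b"
    proof (cases "ys = []")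
      case True
      then show ?thesis using path by (auto elim: rtrancl_path.cases)
    next
      case False
      then have "(a # ys) ! length ys = last ys" by (cases ys) (auto simp: last_conv_nth)
      then show ?thesis using rtrancl_path_last[OF path False] by simp
    qed
    show "\<forall>t<length ys. ((a # ys) ! t, (a # ys) ! Suc t) \<in> Q"
      using rtrancl_path_nth[OF path] by simp
    show "inj_on (\<lambda>t. (a # ys) ! t) {..length ys}"
      using dist by (force simp: inj_on_def distinct_conv_nth less_Suc_eq_le)
  qed simp
qed

lemma deficiency_single_reaction:
  fixes a b :: "'s::finite cplx"
  assumes "a \<noteq> b"
  shows "deficiency {(a, b)} = 0"
proof -
  have cplx: "complexes {(a, b)} = {a, b}" by (auto simp: complexes_def)
  have "linkage_classes {(a, b)} = {complexes {(a, b)}}"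
    by (rule linkage_classes_eq_singleton) (auto simp: cplx linked_def)
  moreover have "stoich_subspace {(a, b)} = span {b - a}"
    unfolding stoich_subspace_def by (rule arg_cong[where f = span]) auto
  ultimately show ?thesis
    using assms unfolding deficiency_def by (simp add: cplx)
qed

lemma decomposition_block_singletons:
  assumes "T \<subseteq> R" "T \<noteq> {}" "distinct xs" "set xs = R - T"
  shows "decomposition R (Suc (length xs)) (\<lambda>j. if j = 0 then T else {xs ! (j - 1)})"
proof -
  have outside: "j < length xs \<Longrightarrow> xs ! j \<notin> T" for j
    using assms(4) nth_mem by fastforce
  have "(\<Union>j<Suc (length xs). if j = 0 then T else {xs ! (j - 1)}) = T \<union> set xs"
    by (auto simp: lessThan_Suc_eq_insert_0 set_conv_nth)
  then show ?thesis
    unfolding decomposition_def using assms outside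
    by (auto simp: nth_eq_iff_index_eq)
qed

lemma deficiency_eq_subnetwork:
  fixes R :: "'s::finite reaction set"
  assumes crn: "crn R"
    and additive: "\<forall>k Rs. decomposition R k Rs \<longrightarrow> deficiency R = (\<Sum>i<k. deficiency (Rs i))"
    and "T \<subseteq> R" "T \<noteq> {}"
  shows "deficiency R = deficiency T"
proof -
  obtain xs where xs: "distinct xs" "set xs = R - T"
    using finite_distinct_list[of "R - T"] crn by (auto simp: crn_def)
  have "deficiency R
      = (\<Sum>j<Suc (length xs). deficiency (if j = 0 then T else {xs ! (j - 1)}))"
    using additive decomposition_block_singletons[OF assms(3,4) xs] by blast
  also have "\<dots> = deficiency T + (\<Sum>j<length xs. deficiency {xs ! j})"
    by (simp only: sum.lessThan_Suc_shift) simp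
  also have "(\<Sum>j<length xs. deficiency {xs ! j}) = 0"
  proof (rule sum.neutral, clarify)
    fix j assume "j < length xs"
    moreover obtain a b where ab: "xs ! j = (a, b)" by fastforce
    ultimately have "(a, b) \<in> R" using xs nth_mem by fastforce
    then have "a \<noteq> b" using crn unfolding crn_def by auto
    then show "deficiency {xs ! j} = 0" using ab deficiency_single_reaction by simp
  qed
  finally show ?thesis by simp
qed

lemma deficiency_subnetwork_zero:
  fixes R :: "'s::finite reaction set"
  assumes crn: "crn R"
    and additive: "\<forall>k Rs. decomposition R k Rs \<longrightarrow> deficiency R = (\<Sum>i<k. deficiency (Rs i))"
    and "T \<subseteq> R" "T \<noteq> {}"
  shows "deficiency T = 0"
proof -
  obtain a b where ab: "(a, b) \<in> T" using assms(4) by auto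
  then have "(a, b) \<in> R" "a \<noteq> b" using assms(3) crn unfolding crn_def by auto
  then have "deficiency R = 0"
    using deficiency_eq_subnetwork[OF crn additive, of "{(a, b)}"] deficiency_single_reaction
    by simp
  then show ?thesis using deficiency_eq_subnetwork[OF crn additive assms(3,4)] by simp
qed

definition path_network :: "(nat \<Rightarrow> 's::finite cplx) \<Rightarrow> nat \<Rightarrow> 's reaction set" where
  "path_network f n = {(f t, f (Suc t)) | t. t < n}"

lemma complexes_path_network:
  assumes "0 < n"
  shows "complexes (path_network f n) = f ` {..n}"
proof
  show "complexes (path_network f n) \<subseteq> f ` {..n}"
    unfolding complexes_def path_network_def by force
  have "f t \<in> complexes (path_network f n)" if "t \<le> n" for t
  proof (cases "t < n")
    case True
    then show ?thesis unfolding complexes_def path_network_def by force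
  next
    case False
    then have "t = Suc (n - 1)" "n - 1 < n" using that assms by auto
    then show ?thesis unfolding complexes_def path_network_def by force
  qed
  then show "f ` {..n} \<subseteq> complexes (path_network f n)" by auto
qed

lemma linkage_classes_path_network:
  assumes "0 < n"
  shows "linkage_classes (path_network f n) = {complexes (path_network f n)}"
proof (rule linkage_classes_eq_singleton)
  show "complexes (path_network f n) \<noteq> {}"
    using complexes_path_network[OF assms] by auto
  have from_start: "(f 0, f j) \<in> linked (path_network f n)" if "j \<le> n" for j
    using that
  proof (induction j)
    case (Suc j)
    then have "(f j, f (Suc j)) \<in> path_network f n"
      unfolding path_network_def by auto
    then have "(f j, f (Suc j)) \<in> linked (path_network f n)"
      unfolding linked_def by auto
    with Suc show ?case unfolding linked_def by (meson Suc_leD rtrancl_trans)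
  qed (simp add: linked_def)
  fix z w
  assume "z \<in> complexes (path_network f n)" "w \<in> complexes (path_network f n)"
  then obtain i j where "i \<le> n" "j \<le> n" "z = f i" "w = f j"
    unfolding complexes_path_network[OF assms] by auto
  then show "(z, w) \<in> linked (path_network f n)"
    using linked_sym[OF from_start] from_start unfolding linked_def
    by (meson rtrancl_trans)
qed

lemma stoich_subspace_path_network:
  "stoich_subspace (path_network f n) = span ((\<lambda>t. f (Suc t) - f t) ` {..<n})"
  unfolding stoich_subspace_def path_network_def by (rule arg_cong[where f = span]) auto

lemma path_network_reaction_vectors_independent:
  fixes f :: "nat \<Rightarrow> 's::finite cplx"
  assumes inj: "inj_on f {..n}"
    and deficiency: "deficiency (path_network f n) = 0"
    and comb: "(\<Sum>t<n. c t *\<^sub>R (f (Suc t) - f t)) = 0"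
    and "t < n"
  shows "c t = 0"
proof -
  define d where "d = (\<lambda>t. f (Suc t) - f t)"
  define D where "D = d ` {..<n}"
  have "0 < n" using \<open>t < n\<close> by simp
  have "card (complexes (path_network f n)) = Suc n"
    unfolding complexes_path_network[OF \<open>0 < n\<close>] using card_image[OF inj] by simp
  then have dimD: "dim D = n"
    using deficiency linkage_classes_path_network[OF \<open>0 < n\<close>, of f]
    unfolding deficiency_def stoich_subspace_path_network D_def d_def by simp
  have finD: "finite D" unfolding D_def by simp
  have "dim D \<le> card D" using dim_le_card[of D D] finD span_superset by blast
  moreover have "card D \<le> n" unfolding D_def using card_image_le[of "{..<n}" d] by simp
  ultimately have cardD: "card D = n" using dimD by simp
  then have injd: "inj_on d {..<n}" unfolding D_def by (simp add: eq_card_imp_inj_on)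
  have indD: "independent D"
    using card_eq_dim[of D D] finD cardD dimD span_superset by auto
  define c' where "c' = (\<lambda>v. c (inv_into {..<n} d v))"
  have "(\<Sum>v\<in>D. c' v *\<^sub>R v) = (\<Sum>t<n. c' (d t) *\<^sub>R d t)"
    unfolding D_def by (rule sum.reindex[OF injd, unfolded comp_def])
  also have "\<dots> = (\<Sum>t<n. c t *\<^sub>R d t)"
    by (rule sum.cong) (auto simp: c'_def inv_into_f_f[OF injd])
  also have "\<dots> = 0" using comb unfolding d_def .
  finally have "\<forall>v\<in>D. c' v = 0" using indD unfolding independent_explicit by blast
  then show ?thesis
    unfolding D_def c'_def using inv_into_f_f[OF injd] \<open>t < n\<close> by force
qed

lemma decomposition_sum_indicator:
  fixes w :: "'a::comm_monoid_add"
  assumes dec: "decomposition R k Rs" and "x \<in> R"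
  shows "(\<Sum>j<k. if x \<in> Rs j then w else 0) = w"
proof -
  obtain i where i: "i < k" "x \<in> Rs i" using assms unfolding decomposition_def by auto
  then have "{j. j < k \<and> x \<in> Rs j} = {i}"
    using dec unfolding decomposition_def by auto
  then have "(\<Sum>j<k. if x \<in> Rs j then w else 0) = (\<Sum>j\<in>{i}. w)"
    by (subst sum.inter_filter[symmetric]) (auto simp: lessThan_def Collect_conj_eq[symmetric])
  then show ?thesis by simp
qed

lemma independent_decomposition_closed_walk:
  assumes ind: "independent_decomposition R k Rs" and "i < k" and yy': "(y, y') \<in> Rs i"
    and walk: "f 0 = y'" "f n = y" "\<forall>t<n. (f t, f (Suc t)) \<in> R"
  shows "(\<Sum>t<n. (if (f t, f (Suc t)) \<in> Rs i then 0 else 1::real) *\<^sub>R (f (Suc t) - f t)) = 0"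
proof -
  have dec: "decomposition R k Rs"
    using ind unfolding independent_decomposition_def by blast
  have "(y, y') \<in> R" using dec yy' \<open>i < k\<close> unfolding decomposition_def by auto
  define d where "d = (\<lambda>t. f (Suc t) - f t)"
  have telescope: "(\<Sum>t<n. d t) = y - y'"
    unfolding d_def using walk by (simp add: sum_lessThan_telescope)
  define v where "v = (\<lambda>j. (\<Sum>t<n. if (f t, f (Suc t)) \<in> Rs j then d t else 0)
                           + (if (y, y') \<in> Rs j then y' - y else 0))"
  have v_in: "\<forall>j<k. v j \<in> stoich_subspace (Rs j)"
  proof (intro allI impI)
    fix j
    have "(if (a, b) \<in> Rs j then b - a else 0) \<in> stoich_subspace (Rs j)" for a b
      unfolding stoich_subspace_def by (auto intro: span_base simp: span_zero)
    then show "v j \<in> stoich_subspace (Rs j)"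
      unfolding v_def d_def stoich_subspace_def by (intro span_add span_sum) blast+
  qed
  have "(\<Sum>j<k. v j) = (\<Sum>t<n. \<Sum>j<k. if (f t, f (Suc t)) \<in> Rs j then d t else 0)
                     + (\<Sum>j<k. if (y, y') \<in> Rs j then y' - y else 0)"
    unfolding v_def by (simp add: sum.distrib sum.swap[of _ "{..<k}"])
  also have "\<dots> = (\<Sum>t<n. d t) + (y' - y)"
    using decomposition_sum_indicator[OF dec] walk \<open>(y, y') \<in> R\<close>
    by (intro arg_cong2[where f = "(+)"] sum.cong) auto
  finally have "(\<Sum>j<k. v j) = 0" using telescope by simp
  then have "v i = 0"
    using ind v_in \<open>i < k\<close> unfolding independent_decomposition_def by blast
  have "(\<Sum>t<n. (if (f t, f (Suc t)) \<in> Rs i then 0 else 1::real) *\<^sub>R d t)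
      = (\<Sum>t<n. d t) - (\<Sum>t<n. if (f t, f (Suc t)) \<in> Rs i then d t else 0)"
    unfolding sum_subtractf[symmetric] by (rule sum.cong) auto
  also have "\<dots> = (\<Sum>t<n. d t) - (v i - (y' - y))" using yy' unfolding v_def by simp
  finally show ?thesis using telescope \<open>v i = 0\<close> unfolding d_def by simp
qed

lemma reaction_reversible_in_block:
  fixes R :: "'s::finite reaction set"
  assumes crn: "crn R" and wr: "weakly_reversible R"
    and additive: "\<forall>k Rs. decomposition R k Rs \<longrightarrow> deficiency R = (\<Sum>i<k. deficiency (Rs i))"
    and ind: "independent_decomposition R k Rs" and "i < k" and yy': "(y, y') \<in> Rs i"
  shows "(y', y) \<in> (Rs i)\<^sup>*"
proof -
  have "(y, y') \<in> R"
    using ind yy' \<open>i < k\<close> unfolding independent_decomposition_def decomposition_def by auto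
  then have "(y', y) \<in> R\<^sup>*"
    using wr unfolding weakly_reversible_iff_reactions_reversible by blast
  then obtain n f where walk: "f 0 = y'" "f n = y" "\<forall>t<n. (f t, f (Suc t)) \<in> R"
    and inj: "inj_on f {..n}"
    by (rule rtrancl_imp_simple_walk)
  show ?thesis
  proof (cases "n = 0")
    case True
    then show ?thesis using walk by simp
  next
    case False
    have "path_network f n \<subseteq> R" "path_network f n \<noteq> {}"
      using walk False unfolding path_network_def by auto
    then have deficiency: "deficiency (path_network f n) = 0"
      by (rule deficiency_subnetwork_zero[OF crn additive])
    have "(f t, f (Suc t)) \<in> Rs i" if "t < n" for t
    proof -
      have "(if (f t, f (Suc t)) \<in> Rs i then 0 else 1::real) = 0"
        using path_network_reaction_vectors_independent[OF inj deficiency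
            independent_decomposition_closed_walk[OF ind \<open>i < k\<close> yy' walk] that] .
      then show ?thesis by (simp split: if_splits)
    qed
    then show ?thesis using walk_in_rtrancl[of n f "Rs i"] walk by simp
  qed
qed

theorem mainTheorem6:
  fixes R :: "'s::finite reaction set"
  assumes "crn R"
    and "weakly_reversible R"
    and "\<forall>k Rs. decomposition R k Rs \<longrightarrow> deficiency R = (\<Sum>i<k. deficiency (Rs i))"
    and "independent_decomposition R k Rs"
  shows "weakly_reversible_decomposition R k Rs"
proof -
  have "weakly_reversible (Rs i)" if "i < k" for i
    unfolding weakly_reversible_iff_reactions_reversible
    using reaction_reversible_in_block[OF assms that] by blast
  then show ?thesis
    using assms(4) unfolding weakly_reversible_decomposition_def independent_decomposition_def
    by blast
qed

end
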